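(* Let $X \subseteq \omega$ and let $\mathcal{A}$ be a pca with a strongly $X$-effectively pca-valued partial numbering $\gamma$. Then $\mathcal{A}$ is embeddable in $\mathcal{K}_2^X$ and hence in $\mathcal{K}_2$.
   Context: A pca is a set with a partial binary application operation containing distinct $\mathrm{s},\mathrm{k}$ with $\mathrm{k}ab\downarrow=a$, $\mathrm{s}ab\downarrow$, $\mathrm{s}abc\simeq(ac)(bc)$. An embedding of pcas is an injective map $f$ with: if $ab$ is defined then $f(a)f(b)$ is defined and equals $f(ab)$. A partial numbering of a set $S$ is a surjective partial function $\gamma:\omega\rightharpoonup S$. For a pca $\mathcal{A}$, $\gamma$ is $X$-effectively pca-valued if there is a partial $X$-computable $\psi:\omega^2\rightharpoonup\omega$ such that for all $n,m\in\mathrm{dom}(\gamma)$, if $\gamma(n)\gamma(m)$ is defined then $\gamma(\psi(n,m))=\gamma(n)\gamma(m)$. It is strongly $X$-effectively pca-valued if such a $\psi$ can be chosen so that moreover, for all $n,m,k,l\in\mathrm{dom}(\gamma)$, if $\gamma(n)\gamma(m)$ and $\gamma(k)\gamma(l)$ are both defined and equal then $\psi(n,m)=\psi(k,l)$. $\mathcal{K}_2$: elements are all total functions $g:\omega\to\omega$, with $g\cdot h$ the function $n\mapsto\Phi^{g\oplus h}_{g(0)}(n)$ ($\Phi_e$ the $e$-th Turing functional, $(g\oplus h)(2n)=g(n)$, $(g\oplus h)(2n+1)=h(n)$), defined iff this function is total; $\mathcal{K}_2^X$ is the sub-pca of $X$-computable functions. *)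

theory Defs
  imports Main "HOL-Library.Nat_Bijection"
begin

datatype rf = Zr | Sc | Idf | Fstf | Sndf | Orc | Comp rf rf | Pairf rf rf | Prim rf rf | Mu rf

inductive eval :: "(nat \<Rightarrow> nat) \<Rightarrow> rf \<Rightarrow> nat \<Rightarrow> nat \<Rightarrow> bool" for f where
  ev_Zr: "eval f Zr x 0"
| ev_Sc: "eval f Sc x (Suc x)"
| ev_Idf: "eval f Idf x x"
| ev_Fst: "eval f Fstf x (fst (prod_decode x))"
| ev_Snd: "eval f Sndf x (snd (prod_decode x))"
| ev_Orc: "eval f Orc x (f x)"
| ev_Comp: "eval f q x y \<Longrightarrow> eval f p y z \<Longrightarrow> eval f (Comp p q) x z"
| ev_Pair: "eval f p x a \<Longrightarrow> eval f q x b \<Longrightarrow> eval f (Pairf p q) x (prod_encode (a, b))"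
| ev_Prim0: "eval f p y z \<Longrightarrow> eval f (Prim p q) (prod_encode (0, y)) z"
| ev_PrimS: "eval f (Prim p q) (prod_encode (n, y)) r \<Longrightarrow>
     eval f q (prod_encode (n, prod_encode (y, r))) z \<Longrightarrow>
     eval f (Prim p q) (prod_encode (Suc n, y)) z"
| ev_Mu: "eval f p (prod_encode (x, n)) 0 \<Longrightarrow>
     (\<forall>i<n. \<exists>v. v \<noteq> 0 \<and> eval f p (prod_encode (x, i)) v) \<Longrightarrow>
     eval f (Mu p) x n"

fun code :: "rf \<Rightarrow> nat" where
  "code Zr = prod_encode (0, 0)"
| "code Sc = prod_encode (1, 0)"
| "code Idf = prod_encode (2, 0)"
| "code Fstf = prod_encode (3, 0)"
| "code Sndf = prod_encode (4, 0)"
| "code Orc = prod_encode (5, 0)"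
| "code (Comp p q) = prod_encode (6, prod_encode (code p, code q))"
| "code (Pairf p q) = prod_encode (7, prod_encode (code p, code q))"
| "code (Prim p q) = prod_encode (8, prod_encode (code p, code q))"
| "code (Mu p) = prod_encode (9, code p)"

text \<open>Phi e f n v: the e-th Turing functional with oracle f on input n converges to v
  (numbers that code no program give the nowhere defined functional).\<close>
definition Phi :: "nat \<Rightarrow> (nat \<Rightarrow> nat) \<Rightarrow> nat \<Rightarrow> nat \<Rightarrow> bool" where
  "Phi e f n v \<longleftrightarrow> (\<exists>p. code p = e \<and> eval f p n v)"

definition chi :: "nat set \<Rightarrow> nat \<Rightarrow> nat" where
  "chi X n = (if n \<in> X then 1 else 0)"

definition X_computable :: "nat set \<Rightarrow> (nat \<Rightarrow> nat) \<Rightarrow> bool" where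
  "X_computable X g \<longleftrightarrow> (\<exists>e. \<forall>n. Phi e (chi X) n (g n))"

definition partial_X_computable2 :: "nat set \<Rightarrow> (nat \<Rightarrow> nat \<Rightarrow> nat option) \<Rightarrow> bool" where
  "partial_X_computable2 X \<psi> \<longleftrightarrow>
     (\<exists>e. \<forall>n m v. \<psi> n m = Some v \<longleftrightarrow> Phi e (chi X) (prod_encode (n, m)) v)"

definition papp :: "('a \<Rightarrow> 'a \<Rightarrow> 'a option) \<Rightarrow> 'a option \<Rightarrow> 'a option \<Rightarrow> 'a option" where
  "papp app x y = Option.bind x (\<lambda>a. Option.bind y (\<lambda>b. app a b))"

definition pca :: "('a \<Rightarrow> 'a \<Rightarrow> 'a option) \<Rightarrow> bool" where
  "pca app \<longleftrightarrow> (\<exists>s k. s \<noteq> k \<and>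
     (\<forall>a b. papp app (app k a) (Some b) = Some a) \<and>
     (\<forall>a b. papp app (app s a) (Some b) \<noteq> None) \<and>
     (\<forall>a b c. papp app (papp app (app s a) (Some b)) (Some c) = papp app (app a c) (app b c)))"

definition partial_numbering :: "(nat \<Rightarrow> 'a option) \<Rightarrow> bool" where
  "partial_numbering \<gamma> \<longleftrightarrow> (\<forall>a. \<exists>n. \<gamma> n = Some a)"

definition strongly_eff_pca_valued ::
  "nat set \<Rightarrow> ('a \<Rightarrow> 'a \<Rightarrow> 'a option) \<Rightarrow> (nat \<Rightarrow> 'a option) \<Rightarrow> bool" where
  "strongly_eff_pca_valued X app \<gamma> \<longleftrightarrow> (\<exists>\<psi>. partial_X_computable2 X \<psi> \<and>
     (\<forall>n m a b c. \<gamma> n = Some a \<longrightarrow> \<gamma> m = Some b \<longrightarrow> app a b = Some c \<longrightarrow>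
        (\<exists>r. \<psi> n m = Some r \<and> \<gamma> r = Some c)) \<and>
     (\<forall>n m k l a b a' b' c. \<gamma> n = Some a \<longrightarrow> \<gamma> m = Some b \<longrightarrow>
        \<gamma> k = Some a' \<longrightarrow> \<gamma> l = Some b' \<longrightarrow>
        app a b = Some c \<longrightarrow> app a' b' = Some c \<longrightarrow> \<psi> n m = \<psi> k l))"

definition join :: "(nat \<Rightarrow> nat) \<Rightarrow> (nat \<Rightarrow> nat) \<Rightarrow> nat \<Rightarrow> nat" where
  "join g h n = (if even n then g (n div 2) else h (n div 2))"

definition K2_app :: "(nat \<Rightarrow> nat) \<Rightarrow> (nat \<Rightarrow> nat) \<Rightarrow> (nat \<Rightarrow> nat) option" where
  "K2_app g h = (if \<forall>n. \<exists>v. Phi (g 0) (join g h) n v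
                 then Some (\<lambda>n. THE v. Phi (g 0) (join g h) n v) else None)"

definition embedding_K2 :: "('a \<Rightarrow> 'a \<Rightarrow> 'a option) \<Rightarrow> ('a \<Rightarrow> nat \<Rightarrow> nat) \<Rightarrow> bool" where
  "embedding_K2 app f \<longleftrightarrow> inj f \<and>
     (\<forall>a b c. app a b = Some c \<longrightarrow> K2_app (f a) (f b) = Some (f c))"

definition embedding_K2X :: "nat set \<Rightarrow> ('a \<Rightarrow> 'a \<Rightarrow> 'a option) \<Rightarrow> ('a \<Rightarrow> nat \<Rightarrow> nat) \<Rightarrow> bool" where
  "embedding_K2X X app f \<longleftrightarrow> (\<forall>a. X_computable X (f a)) \<and> embedding_K2 app f"

end

theory Submission
  imports Defs
begin

text \<open>
  Let \<open>\<psi>\<close> track application on indices and choose, for each element \<open>a\<close>, a product \<open>a = a\<^sub>1 a\<^sub>2\<close>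
  (for instance \<open>a = (k a) a\<close>); the value of \<open>\<psi>\<close> on indices of \<open>a\<^sub>1, a\<^sub>2\<close> is an index
  \<open>c a\<close> of \<open>a\<close>, and strongness makes \<open>\<psi> (c a) (c b) = c (a b)\<close>.  So application is
  tracked by one partial \<open>X\<close>-computable function on the injective codes \<open>c a\<close>.
  The element \<open>a\<close> is sent to the function with value \<open>e\<close> at 0 and \<open>\<langle>c a, \<chi>\<^sub>X(i)\<rangle>\<close> at
  \<open>i + 1\<close>, where \<open>e\<close> indexes a functional that, given such a pair of functions
  as oracle, reads off both codes and runs \<open>\<psi>\<close>, answering its \<open>X\<close>-queries from the
  copy of \<open>X\<close> stored in the left argument.
\<close>

lemma eval_deterministic: "eval g p x v \<Longrightarrow> eval g p x w \<Longrightarrow> v = w"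
proof (induction arbitrary: w rule: eval.induct)
  case (ev_Comp q x y p z)
  from ev_Comp.prems show ?case
    by (cases rule: eval.cases) (auto dest: ev_Comp.IH)
next
  case (ev_Pair p x a q b)
  from ev_Pair.prems show ?case
    by (cases rule: eval.cases) (auto dest: ev_Pair.IH)
next
  case (ev_Prim0 p y z q)
  from ev_Prim0.prems show ?case
    by (cases rule: eval.cases) (auto dest: ev_Prim0.IH)
next
  case (ev_PrimS p q n y r z)
  from ev_PrimS.prems show ?case
    by (cases rule: eval.cases) (auto dest: ev_PrimS.IH)
next
  case (ev_Mu p x n)
  from ev_Mu.prems obtain n' where w: "w = n'" and zero: "eval g p (prod_encode (x, n')) 0"
    and nonzero: "\<forall>i<n'. \<exists>v. v \<noteq> 0 \<and> eval g p (prod_encode (x, i)) v"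
    by (cases rule: eval.cases) auto
  show ?case
  proof (rule linorder_cases[of n n'])
    assume "n < n'"
    then show ?case using nonzero ev_Mu.IH(1) by force
  next
    assume "n' < n"
    then show ?case using zero ev_Mu.IH(2) by force
  qed (use w in simp)
qed (auto elim: eval.cases)

lemma eval_Zr_iff [simp]: "eval g Zr x v \<longleftrightarrow> v = 0"
  by (auto elim: eval.cases intro: eval.intros)

lemma eval_Sc_iff [simp]: "eval g Sc x v \<longleftrightarrow> v = Suc x"
  by (auto elim: eval.cases intro: eval.intros)

lemma eval_Idf_iff [simp]: "eval g Idf x v \<longleftrightarrow> v = x"
  by (auto elim: eval.cases intro: eval.intros)

lemma eval_Fstf_iff [simp]: "eval g Fstf x v \<longleftrightarrow> v = fst (prod_decode x)"
  by (auto elim: eval.cases intro: eval.intros)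

lemma eval_Sndf_iff [simp]: "eval g Sndf x v \<longleftrightarrow> v = snd (prod_decode x)"
  by (auto elim: eval.cases intro: eval.intros)

lemma eval_Orc_iff [simp]: "eval g Orc x v \<longleftrightarrow> v = g x"
  by (auto elim: eval.cases intro: eval.intros)

lemma eval_Comp_iff [simp]: "eval g (Comp p q) x z \<longleftrightarrow> (\<exists>y. eval g q x y \<and> eval g p y z)"
  by (auto elim: eval.cases intro: eval.intros)

lemma eval_Pairf_iff [simp]:
  "eval g (Pairf p q) x v \<longleftrightarrow> (\<exists>a b. v = prod_encode (a, b) \<and> eval g p x a \<and> eval g q x b)"
  by (auto elim: eval.cases intro: eval.intros)

lemma inj_code: "inj code"
proof (rule injI)
  show "code p = code q \<Longrightarrow> p = q" for p q
    by (induction p arbitrary: q) (case_tac q; simp)+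
qed

lemma Phi_code_iff: "Phi (code p) g n v \<longleftrightarrow> eval g p n v"
  using inj_code unfolding Phi_def inj_def by blast

lemma X_computableI:
  assumes "\<And>n. eval (chi X) p n (h n)"
  shows "X_computable X h"
  unfolding X_computable_def using assms Phi_code_iff by blast

lemma partial_X_computable2_program:
  assumes "partial_X_computable2 X \<psi>"
  obtains p where "\<And>n m v. \<psi> n m = Some v \<Longrightarrow> eval (chi X) p (prod_encode (n, m)) v"
proof -
  obtain e where e: "\<And>n m v. \<psi> n m = Some v \<longleftrightarrow> Phi e (chi X) (prod_encode (n, m)) v"
    using assms unfolding partial_X_computable2_def by blast
  show thesis
  proof (cases "e \<in> range code")
    case True
    then obtain p where "e = code p" by blast
    with e show thesis by (intro that) (simp add: Phi_code_iff)
  next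
    case False
    then have "\<psi> n m = None" for n m
      using e unfolding Phi_def by (metis not_Some_eq rangeI)
    then show thesis by (intro that) simp
  qed
qed

fun rf_const :: "nat \<Rightarrow> rf" where
  "rf_const 0 = Zr"
| "rf_const (Suc k) = Comp Sc (rf_const k)"

lemma eval_rf_const_iff [simp]: "eval g (rf_const k) x v \<longleftrightarrow> v = k"
  by (induction k arbitrary: v) auto

definition rf_double :: rf where
  "rf_double = Comp (Prim Zr (Comp Sc (Comp Sc (Comp Sndf Sndf)))) (Pairf Idf Idf)"

lemma eval_rf_double_iff [simp]: "eval g rf_double x v \<longleftrightarrow> v = 2 * x"
proof -
  have "eval g (Prim Zr (Comp Sc (Comp Sc (Comp Sndf Sndf)))) (prod_encode (n, y)) (2 * n)" for n y
    by (induction n) (auto intro: eval.ev_Prim0 eval.ev_PrimS)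
  then have "eval g rf_double x (2 * x)"
    unfolding rf_double_def by auto
  then show ?thesis using eval_deterministic by blast
qed

definition rf_case_nat :: "rf \<Rightarrow> rf \<Rightarrow> rf" where
  "rf_case_nat p q = Comp (Prim p (Comp q Fstf)) (Pairf Idf Idf)"

lemma eval_rf_case_nat:
  assumes "\<And>x. eval g p x v" and "\<And>x. eval g q x (h x)"
  shows "eval g (rf_case_nat p q) n (case_nat v h n)"
proof -
  have "eval g (Prim p (Comp q Fstf)) (prod_encode (k, y)) (case_nat v h k)" for k y
  proof (induction k)
    case 0
    show ?case using assms(1) by (auto intro: eval.ev_Prim0)
  next
    case (Suc k)
    then show ?case using assms(2) by (auto intro: eval.ev_PrimS)
  qed
  then show ?thesis unfolding rf_case_nat_def by auto
qed

fun subst_oracle :: "rf \<Rightarrow> rf \<Rightarrow> rf" where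
  "subst_oracle T Orc = T"
| "subst_oracle T (Comp p q) = Comp (subst_oracle T p) (subst_oracle T q)"
| "subst_oracle T (Pairf p q) = Pairf (subst_oracle T p) (subst_oracle T q)"
| "subst_oracle T (Prim p q) = Prim (subst_oracle T p) (subst_oracle T q)"
| "subst_oracle T (Mu p) = Mu (subst_oracle T p)"
| "subst_oracle T p = p"

lemma eval_subst_oracle:
  assumes "eval h p x v" and "\<And>y. eval g T y (h y)"
  shows "eval g (subst_oracle T p) x v"
  using assms(1)
proof (induction rule: eval.induct)
  case (ev_Orc x)
  show ?case using assms(2) by simp
next
  case (ev_Mu p x n)
  then show ?case by (auto intro!: eval.ev_Mu)
qed (auto intro: eval.intros)

lemma K2_app_eq_Some:
  assumes "g 0 = code p" and "\<And>n. eval (join g h) p n (r n)"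
  shows "K2_app g h = Some r"
proof -
  have "Phi (g 0) (join g h) n v \<longleftrightarrow> v = r n" for n v
    using assms eval_deterministic by (auto simp: Phi_code_iff)
  then show ?thesis unfolding K2_app_def by auto
qed

definition K2_elem :: "nat \<Rightarrow> nat set \<Rightarrow> nat \<Rightarrow> nat \<Rightarrow> nat" where
  "K2_elem e X k = case_nat e (\<lambda>i. prod_encode (k, chi X i))"

lemma inj_K2_elem: "inj (K2_elem e X)"
  by (rule injI) (metis K2_elem_def nat.simps(5) prod.inject prod_encode_eq)

lemma X_computable_K2_elem: "X_computable X (K2_elem e X k)"
proof (rule X_computableI)
  show "eval (chi X) (rf_case_nat (rf_const e) (Pairf (rf_const k) Orc)) n (K2_elem e X k n)" for n
    unfolding K2_elem_def by (rule eval_rf_case_nat) auto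
qed

text \<open>In the join of two functions \<open>K2_elem e X k\<close>, position \<open>2 (y + 1)\<close> holds
  \<open>\<langle>k, \<chi>\<^sub>X y\<rangle>\<close>, and positions 2 and 3 hold the codes of the left and right argument.\<close>

definition rf_X_from_join :: rf where
  "rf_X_from_join = Comp Sndf (Comp Orc (Comp rf_double Sc))"

definition rf_codes_from_join :: rf where
  "rf_codes_from_join = Pairf (Comp Fstf (Comp Orc (rf_const 2))) (Comp Fstf (Comp Orc (rf_const 3)))"

text \<open>The index at position 0 is read from the oracle rather than built in with \<open>rf_const\<close>,
  since the program cannot contain its own code.\<close>

definition rf_K2_app :: "rf \<Rightarrow> rf" where
  "rf_K2_app p = rf_case_nat (Comp Orc Zr)
     (Pairf (Comp (subst_oracle rf_X_from_join p) rf_codes_from_join) rf_X_from_join)"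

lemma K2_app_K2_elem:
  assumes "eval (chi X) p (prod_encode (k, l)) m"
  defines "e \<equiv> code (rf_K2_app p)"
  shows "K2_app (K2_elem e X k) (K2_elem e X l) = Some (K2_elem e X m)"
proof (rule K2_app_eq_Some)
  define J where "J = join (K2_elem e X k) (K2_elem e X l)"
  have J_even: "J (2 * n) = K2_elem e X k n" for n
    unfolding J_def join_def by simp
  have X_from_J: "eval J rf_X_from_join y (chi X y)" for y
    unfolding rf_X_from_join_def using J_even[of "Suc y"] by (simp add: K2_elem_def)
  have "J 2 = prod_encode (k, chi X 0)" and "J 3 = prod_encode (l, chi X 0)"
    using J_even[of 1] unfolding J_def join_def K2_elem_def by simp_all
  then have "eval J rf_codes_from_join x (prod_encode (k, l))" for x
    unfolding rf_codes_from_join_def by simp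
  moreover have "eval J (subst_oracle rf_X_from_join p) (prod_encode (k, l)) m"
    using assms(1) X_from_J by (rule eval_subst_oracle)
  ultimately have step: "eval J (Pairf (Comp (subst_oracle rf_X_from_join p) rf_codes_from_join)
      rf_X_from_join) i (prod_encode (m, chi X i))" for i
    using X_from_J by auto
  have "eval J (Comp Orc Zr) x e" for x
    using J_even[of 0] by (simp add: K2_elem_def)
  then show "eval J (rf_K2_app p) n (K2_elem e X m n)" for n
    unfolding rf_K2_app_def K2_elem_def using step by (rule eval_rf_case_nat)
  show "K2_elem e X k 0 = code (rf_K2_app p)"
    by (simp add: K2_elem_def e_def)
qed

lemma embedding_K2X_of_tracked_codes:
  assumes "inj c"
    and "\<And>a b d. app a b = Some d \<Longrightarrow> eval (chi X) p (prod_encode (c a, c b)) (c d)"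
  shows "embedding_K2X X app (\<lambda>a. K2_elem (code (rf_K2_app p)) X (c a))"
  unfolding embedding_K2X_def embedding_K2_def
  using assms inj_K2_elem X_computable_K2_elem K2_app_K2_elem
  by (auto intro: inj_compose[unfolded comp_def])

lemma pca_app_surj:
  assumes "pca app"
  shows "\<exists>a\<^sub>1 a\<^sub>2. app a\<^sub>1 a\<^sub>2 = Some a"
proof -
  obtain k where k: "\<And>a b. papp app (app k a) (Some b) = Some a"
    using assms unfolding pca_def by blast
  show ?thesis
    using k[of a a] unfolding papp_def by (cases "app k a") auto
qed

lemma strongly_eff_pca_valued_canonical_index:
  assumes surj: "\<And>a. \<exists>a\<^sub>1 a\<^sub>2. app a\<^sub>1 a\<^sub>2 = Some a"
    and "partial_numbering \<gamma>"
    and "strongly_eff_pca_valued X app \<gamma>"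
  obtains \<psi> c where "partial_X_computable2 X \<psi>" and "inj c"
    and "\<And>a b d. app a b = Some d \<Longrightarrow> \<psi> (c a) (c b) = Some (c d)"
proof -
  obtain \<psi> where \<psi>: "partial_X_computable2 X \<psi>"
    and tracks: "\<forall>n m a b c. \<gamma> n = Some a \<longrightarrow> \<gamma> m = Some b \<longrightarrow> app a b = Some c \<longrightarrow>
        (\<exists>r. \<psi> n m = Some r \<and> \<gamma> r = Some c)"
    and strong: "\<forall>n m k l a b a' b' c. \<gamma> n = Some a \<longrightarrow> \<gamma> m = Some b \<longrightarrow>
        \<gamma> k = Some a' \<longrightarrow> \<gamma> l = Some b' \<longrightarrow>
        app a b = Some c \<longrightarrow> app a' b' = Some c \<longrightarrow> \<psi> n m = \<psi> k l"
    using assms(3) unfolding strongly_eff_pca_valued_def by blast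
  have "\<exists>n\<^sub>1 n\<^sub>2 a\<^sub>1 a\<^sub>2. \<gamma> n\<^sub>1 = Some a\<^sub>1 \<and> \<gamma> n\<^sub>2 = Some a\<^sub>2 \<and> app a\<^sub>1 a\<^sub>2 = Some a" for a
    using surj assms(2) unfolding partial_numbering_def by metis
  then obtain N\<^sub>1 N\<^sub>2 where N: "\<And>a. \<exists>a\<^sub>1 a\<^sub>2.
      \<gamma> (N\<^sub>1 a) = Some a\<^sub>1 \<and> \<gamma> (N\<^sub>2 a) = Some a\<^sub>2 \<and> app a\<^sub>1 a\<^sub>2 = Some a"
    by metis
  define c where "c a = the (\<psi> (N\<^sub>1 a) (N\<^sub>2 a))" for a
  have c: "\<psi> (N\<^sub>1 a) (N\<^sub>2 a) = Some (c a) \<and> \<gamma> (c a) = Some a" for a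
    using N[of a] tracks unfolding c_def by fastforce
  show thesis
  proof
    show "partial_X_computable2 X \<psi>" by (rule \<psi>)
    show "inj c"
      using c by (metis injI option.inject)
    show "\<psi> (c a) (c b) = Some (c d)" if "app a b = Some d" for a b d
      using N[of d] c[of a] c[of b] c[of d] strong that by metis
  qed
qed

theorem theorem6p1:
  fixes X :: "nat set" and app :: "'a \<Rightarrow> 'a \<Rightarrow> 'a option" and \<gamma> :: "nat \<Rightarrow> 'a option"
  assumes "pca app"
    and "partial_numbering \<gamma>"
    and "strongly_eff_pca_valued X app \<gamma>"
  shows "(\<exists>f. embedding_K2X X app f) \<and> (\<exists>f. embedding_K2 app f)"
proof -
  obtain \<psi> c where \<psi>: "partial_X_computable2 X \<psi>" and "inj c"
    and c_app: "\<And>a b d. app a b = Some d \<Longrightarrow> \<psi> (c a) (c b) = Some (c d)"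
    using strongly_eff_pca_valued_canonical_index[OF pca_app_surj[OF assms(1)] assms(2,3)]
    by blast
  obtain p where p: "\<And>n m v. \<psi> n m = Some v \<Longrightarrow> eval (chi X) p (prod_encode (n, m)) v"
    using partial_X_computable2_program[OF \<psi>] by blast
  have "embedding_K2X X app (\<lambda>a. K2_elem (code (rf_K2_app p)) X (c a))"
    using \<open>inj c\<close> by (rule embedding_K2X_of_tracked_codes) (use c_app p in blast)
  then have "\<exists>f. embedding_K2X X app f" by blast
  then show ?thesis unfolding embedding_K2X_def by blast
qed

end
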